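(* Every $3$-uniform hypergraph with $7$ vertices and $30$ edges not containing a Fano plane is isomorphic to either $B_7$ or $J_7$.
   Context: Hypergraphs are $3$-uniform; "containing" means having a (not necessarily induced) subhypergraph isomorphic to it. The Fano plane is the hypergraph on vertex set $\{1,\dots,7\}$ with edges $123,345,156,147,367,257,246$ (the lines of the projective plane over the field with two elements). $B_7$ is the hypergraph on $7$ vertices with a partition $V=X\cup Y$ into disjoint sets of sizes $3$ and $4$ whose edges are exactly the triples meeting both $X$ and $Y$. $J_7$ is obtained from the complete $3$-uniform hypergraph on $7$ vertices by deleting the five edges containing a fixed pair of vertices. *)

theory Defs
  imports Main
begin

definition uniform3 :: "'a set \<Rightarrow> 'a set set \<Rightarrow> bool" where
  "uniform3 V E \<longleftrightarrow> finite V \<and> (\<forall>e\<in>E. e \<subseteq> V \<and> card e = 3)"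

definition contains_hg :: "'a set \<Rightarrow> 'a set set \<Rightarrow> 'b set \<Rightarrow> 'b set set \<Rightarrow> bool" where
  "contains_hg V E W F \<longleftrightarrow> (\<exists>f. inj_on f W \<and> f ` W \<subseteq> V \<and> (\<forall>e\<in>F. f ` e \<in> E))"

definition iso_hg :: "'a set \<Rightarrow> 'a set set \<Rightarrow> 'b set \<Rightarrow> 'b set set \<Rightarrow> bool" where
  "iso_hg V E W F \<longleftrightarrow> (\<exists>f. bij_betw f V W \<and> (\<lambda>e. f ` e) ` E = F)"

definition V7 :: "nat set" where "V7 = {1..7}"

definition fano :: "nat set set" where
  "fano = {{1,2,3},{3,4,5},{1,5,6},{1,4,7},{3,6,7},{2,5,7},{2,4,6}}"

definition B7 :: "nat set set" where
  "B7 = {e. e \<subseteq> V7 \<and> card e = 3 \<and> e \<inter> {1,2,3} \<noteq> {} \<and> e \<inter> {4,5,6,7} \<noteq> {}}"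

definition J7 :: "nat set set" where
  "J7 = {e. e \<subseteq> V7 \<and> card e = 3 \<and> \<not> {1,2} \<subseteq> e}"

end

theory Submission
  imports Defs
begin

text \<open>
  A 3-graph on 7 vertices with 30 edges has exactly 5 non-edges. Two non-edges never meet in
  exactly one vertex: if 123 and 145 are non-edges, then 20 of the 30 Fano planes on [7]
  contain neither of them; each of these 20 must contain one of the remaining 3 non-edges, but
  a triple lies in only 6 Fano planes and 3 * 6 < 20. Since five pairwise disjoint triples do
  not fit into 7 vertices, two non-edges share a pair, say 123 and 124. Every other non-edge
  then meets both of them in 0 or 2 vertices, which leaves two configurations: the five triples
  through 12 (the non-edges of J_7) and the four triples inside 1234 together with 567 (the
  non-edges of B_7).
\<close>

definition triples :: "'a set \<Rightarrow> 'a set set" where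
  "triples V = {e. e \<subseteq> V \<and> card e = 3}"

definition hg_image :: "('a \<Rightarrow> 'b) \<Rightarrow> 'a set set \<Rightarrow> 'b set set" where
  "hg_image g E = (\<lambda>e. g ` e) ` E"

lemma triples_code: "triples V = Set.filter (\<lambda>e. card e = 3) (Pow V)"
  unfolding triples_def by auto

lemma card_triples: "finite V \<Longrightarrow> card (triples V) = card V choose 3"
  unfolding triples_def by (rule n_subsets)

lemma uniform3_iff_subset_triples: "uniform3 V E \<longleftrightarrow> finite V \<and> E \<subseteq> triples V"
  unfolding uniform3_def triples_def by blast

lemma card_nonedges:
  assumes "uniform3 V E"
  shows "card (triples V - E) = (card V choose 3) - card E"
proof -
  have "finite V" "E \<subseteq> triples V" using assms unfolding uniform3_iff_subset_triples by blast+
  moreover have "finite (triples V)" using \<open>finite V\<close> unfolding triples_def by simp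
  ultimately show ?thesis by (simp add: card_Diff_subset finite_subset card_triples)
qed

lemma card_mult_le_card_if_pairwise_disjnt:
  assumes "finite V" "\<Union>M \<subseteq> V" "pairwise disjnt M" "\<forall>X\<in>M. card X = k"
  shows "card M * k \<le> card V"
proof -
  have "finite X" if "X \<in> M" for X
    using that assms(1,2) by (meson Union_upper finite_subset subset_trans)
  then have "card (\<Union>M) = sum card M" by (rule card_Union_disjoint[OF assms(3)])
  also have "\<dots> = card M * k" using assms(4) by simp
  finally show ?thesis using card_mono[OF assms(1,2)] by simp
qed

lemma sum_list_card_Int:
  assumes "finite R"
  shows "(\<Sum>P\<leftarrow>Ps. card (P \<inter> R)) = (\<Sum>t\<in>R. length (filter (\<lambda>P. t \<in> P) Ps))"
proof (induction Ps)
  case Nil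
  then show ?case by simp
next
  case (Cons P Ps)
  have "card (P \<inter> R) = (\<Sum>t\<in>R. if t \<in> P then 1 else 0)"
    using assms by (simp add: sum.If_cases Int_commute)
  then show ?case using Cons.IH by (auto simp: sum.distrib[symmetric] intro!: sum.cong)
qed

lemma length_le_card_mult_if_hitting:
  assumes "finite R" "\<forall>P\<in>set Ps. P \<inter> R \<noteq> {}" "\<forall>t\<in>R. length (filter (\<lambda>P. t \<in> P) Ps) \<le> k"
  shows "length Ps \<le> card R * k"
proof -
  have "length Ps = (\<Sum>P\<leftarrow>Ps. 1)" by (simp add: sum_list_triv)
  also have "\<dots> \<le> (\<Sum>P\<leftarrow>Ps. card (P \<inter> R))"
    using assms(1,2) by (intro sum_list_mono) (auto simp: Suc_le_eq card_gt_0_iff)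
  also have "\<dots> = (\<Sum>t\<in>R. length (filter (\<lambda>P. t \<in> P) Ps))"
    using sum_list_card_Int[OF assms(1)] .
  also have "\<dots> \<le> card R * k"
    using sum_mono[of R _ "\<lambda>_. k"] assms(3) by simp
  finally show ?thesis .
qed

lemma uniform3_hg_image:
  assumes "bij_betw g V W" "uniform3 V E"
  shows "uniform3 W (hg_image g E)"
proof -
  have "finite W" using assms bij_betw_finite unfolding uniform3_def by blast
  moreover have "g ` e \<subseteq> W \<and> card (g ` e) = 3" if "e \<in> E" for e
    using assms that card_image[OF inj_on_subset]
    unfolding uniform3_def bij_betw_def by fastforce
  ultimately show ?thesis unfolding uniform3_def hg_image_def by blast
qed

lemma card_hg_image:
  assumes "inj_on g V" "E \<subseteq> Pow V"
  shows "card (hg_image g E) = card E"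
  unfolding hg_image_def
  by (rule card_image[OF inj_on_subset[OF inj_on_image_Pow[OF assms(1)] assms(2)]])

lemma image_in_nonedges_hg_image:
  assumes g: "bij_betw g V W" and "E \<subseteq> Pow V" and "A \<in> triples V - E"
  shows "g ` A \<in> triples W - hg_image g E"
proof -
  have A: "A \<subseteq> V" "card A = 3" "A \<notin> E" using assms(3) unfolding triples_def by auto
  have inj_g: "inj_on g V" using g by (simp add: bij_betw_def)
  have "g ` A \<notin> hg_image g E"
  proof
    assume "g ` A \<in> hg_image g E"
    then obtain e where "e \<in> E" "g ` A = g ` e" unfolding hg_image_def by blast
    then have "A = e"
      using inj_onD[OF inj_on_image_Pow[OF inj_g]] A(1) assms(2) by blast
    with \<open>e \<in> E\<close> A(3) show False by blast
  qed
  moreover have "g ` A \<subseteq> W" using A(1) g by (auto simp: bij_betw_def)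
  moreover have "card (g ` A) = 3" using A(1,2) card_image inj_on_subset[OF inj_g] by metis
  ultimately show ?thesis unfolding triples_def by blast
qed

lemma contains_hg_hg_imageD:
  assumes g: "bij_betw g V W" and "E \<subseteq> Pow V" and "contains_hg W (hg_image g E) U F"
  shows "contains_hg V E U F"
proof -
  obtain f where f: "inj_on f U" "f ` U \<subseteq> W" "\<forall>e\<in>F. f ` e \<in> hg_image g E"
    using assms(3) unfolding contains_hg_def by blast
  have inj_g: "inj_on g V" using g by (simp add: bij_betw_def)
  have "inj_on (inv_into V g) W" using bij_betw_inv_into[OF g] by (simp add: bij_betw_def)
  then have "inj_on (inv_into V g \<circ> f) U" by (rule comp_inj_on[OF f(1) inj_on_subset[OF _ f(2)]])
  moreover have "inv_into V g (f x) \<in> V" if "x \<in> U" for x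
    using that f(2) bij_betw_imp_surj_on[OF g] by (blast intro: inv_into_into)
  then have "(inv_into V g \<circ> f) ` U \<subseteq> V" by auto
  moreover have "(inv_into V g \<circ> f) ` e \<in> E" if "e \<in> F" for e
  proof -
    have "f ` e \<in> (\<lambda>e. g ` e) ` E" using f(3) that unfolding hg_image_def by blast
    then obtain e0 where e0: "f ` e = g ` e0" "e0 \<in> E" by (rule imageE)
    have "(inv_into V g \<circ> f) ` e = inv_into V g ` g ` e0" by (simp only: e0(1)[symmetric] image_comp)
    also have "\<dots> = e0" using e0(2) assms(2) by (intro inv_into_image_cancel[OF inj_g]) blast
    finally show ?thesis using e0(2) by simp
  qed
  ultimately show ?thesis unfolding contains_hg_def by (intro exI[of _ "inv_into V g \<circ> f"]) blast
qed

lemma iso_hg_hg_image: "bij_betw g V W \<Longrightarrow> iso_hg V E W (hg_image g E)"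
  unfolding iso_hg_def hg_image_def by blast

lemma iso_hg_trans:
  assumes "iso_hg U E V F" "iso_hg V F W G"
  shows "iso_hg U E W G"
proof -
  obtain f g where f: "bij_betw f U V" "(\<lambda>e. f ` e) ` E = F"
    and g: "bij_betw g V W" "(\<lambda>e. g ` e) ` F = G"
    using assms unfolding iso_hg_def by blast
  have "bij_betw (g \<circ> f) U W" using f(1) g(1) by (rule bij_betw_trans)
  moreover have "(\<lambda>e. (g \<circ> f) ` e) ` E = G"
    unfolding f(2)[symmetric] g(2)[symmetric] image_image image_comp[symmetric] ..
  ultimately show ?thesis unfolding iso_hg_def by blast
qed

lemma ex_bij_betw_numbering:
  assumes "finite V" "card V = n" "distinct xs" "set xs \<subseteq> V"
  shows "\<exists>g. bij_betw g V {1..n} \<and> (\<forall>i<length xs. g (xs ! i) = Suc i)"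
proof -
  define k where "k = length xs"
  define f where "f = Suc \<circ> inv_into {..<k} ((!) xs)"
  have nth: "bij_betw ((!) xs) {..<k} (set xs)" using bij_betw_nth assms(3) k_def by blast
  have f: "bij_betw f (set xs) {1..k}"
    unfolding f_def
    by (rule bij_betw_trans[OF bij_betw_inv_into[OF nth]]) (simp add: image_Suc_lessThan)
  have card_xs: "card (set xs) = k" using assms(3) distinct_card k_def by blast
  then have "k \<le> n" using assms card_mono by metis
  have "card (V - set xs) = card {Suc k..n}"
    using card_xs assms(1,2,4) by (simp add: card_Diff_subset)
  then obtain h where h: "bij_betw h (V - set xs) {Suc k..n}"
    using finite_same_card_bij assms(1) by blast
  define g where "g x = (if x \<in> set xs then f x else h x)" for x
  have "bij_betw g (set xs \<union> (V - set xs)) ({1..k} \<union> {Suc k..n})"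
    unfolding g_def using f h by (intro bij_betw_disjoint_Un) auto
  moreover have "set xs \<union> (V - set xs) = V" using assms(4) by blast
  moreover have "{1..k} \<union> {Suc k..n} = {1..n}" using \<open>k \<le> n\<close> by auto
  moreover have "g (xs ! i) = Suc i" if "i < k" for i
    using nth that unfolding g_def f_def bij_betw_def by (simp add: inv_into_f_f k_def)
  ultimately show ?thesis unfolding k_def by metis
qed

lemma card_3_ex_third:
  assumes "card A = 3" "a \<in> A" "b \<in> A" "a \<noteq> b"
  obtains c where "A = {a, b, c}" "c \<noteq> a" "c \<noteq> b"
proof -
  have "card (A - {a, b}) = 1" using assms by (simp add: card_Diff_subset)
  then obtain c where "A - {a, b} = {c}" by (auto simp: card_1_singleton_iff)
  then show ?thesis using that assms(2,3) by blast
qed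

locale fano_free_7_30 =
  fixes V :: "'a set" and E :: "'a set set"
  assumes uniform: "uniform3 V E"
    and card_V: "card V = 7"
    and card_E: "card E = 30"
    and fano_free: "\<not> contains_hg V E V7 fano"
begin

lemma finite_V: "finite V"
  using uniform unfolding uniform3_def by blast

lemma edges_subset_Pow: "E \<subseteq> Pow V"
  using uniform unfolding uniform3_def by blast

lemma card_nonedges_eq_5: "card (triples V - E) = 5"
proof -
  have "(7::nat) choose 3 = 35" by code_simp
  then show ?thesis using card_nonedges[OF uniform] card_V card_E by simp
qed

lemma relabel:
  assumes "bij_betw g V V7"
  shows "fano_free_7_30 V7 (hg_image g E)"
proof
  show "uniform3 V7 (hg_image g E)" using uniform3_hg_image[OF assms uniform] .
  show "card V7 = 7" by (simp add: V7_def)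
  show "card (hg_image g E) = 30"
    using card_hg_image assms edges_subset_Pow card_E bij_betw_def by metis
  show "\<not> contains_hg V7 (hg_image g E) V7 fano"
    using contains_hg_hg_imageD[OF assms edges_subset_Pow] fano_free by blast
qed

end

text \<open>There are 30 Fano planes on \<open>V7\<close>; 6 contain a given triple and 2 contain two given triples
  meeting in one vertex, so 20 of them avoid both 123 and 145. These are the images of \<open>fano\<close>
  under the listed permutations, \<open>p\<close> sending \<open>i\<close> to \<open>p ! (i - 1)\<close>.\<close>
definition fano_relabellings :: "nat list list" where
  "fano_relabellings =
    [[1,2,4,3,5,6,7], [1,2,4,3,5,7,6], [1,2,4,3,6,5,7], [1,2,4,3,6,7,5], [1,2,4,3,7,5,6],
     [1,2,4,3,7,6,5], [1,2,5,3,4,6,7], [1,2,5,3,4,7,6], [1,2,5,3,6,4,7], [1,2,5,3,6,7,4],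
     [1,2,5,3,7,4,6], [1,2,5,3,7,6,4], [1,2,6,3,4,7,5], [1,2,6,3,5,7,4], [1,2,6,3,7,4,5],
     [1,2,6,3,7,5,4], [1,2,7,3,4,6,5], [1,2,7,3,5,6,4], [1,2,7,3,6,4,5], [1,2,7,3,6,5,4]]"

definition fano_copies :: "nat set set list" where
  "fano_copies = map (\<lambda>p. hg_image (\<lambda>i. p ! (i - 1)) fano) fano_relabellings"

lemma fano_copies_relabel:
  assumes "P \<in> set fano_copies"
  obtains f where "bij_betw f V7 V7" "P = hg_image f fano"
proof -
  have "\<forall>p\<in>set fano_relabellings. bij_betw (\<lambda>i. p ! (i - 1)) V7 V7"
    unfolding fano_relabellings_def bij_betw_def V7_def by code_simp
  then show ?thesis using assms that unfolding fano_copies_def by auto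
qed

lemma fano_copies_avoid_123_145:
  "\<forall>P\<in>set fano_copies. P \<subseteq> triples V7 \<and> {1,2,3} \<notin> P \<and> {1,4,5} \<notin> P"
  unfolding fano_copies_def fano_relabellings_def hg_image_def fano_def triples_code V7_def
  by code_simp

lemma fano_copies_degree: "\<forall>t\<in>triples V7. length (filter (\<lambda>P. t \<in> P) fano_copies) \<le> 6"
  unfolding fano_copies_def fano_relabellings_def hg_image_def fano_def triples_code V7_def
  by code_simp

lemma length_fano_copies: "length fano_copies = 20"
  by (simp add: fano_copies_def fano_relabellings_def)

lemma fano_free_7_30_V7_edge_123_or_145:
  assumes "fano_free_7_30 V7 E"
  shows "{1,2,3} \<in> E \<or> {1,4,5} \<in> E"
proof (rule ccontr)
  interpret fano_free_7_30 V7 E by fact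
  define R where "R = triples V7 - E - {{1,2,3},{1,4,5}}"
  assume "\<not> ?thesis"
  then have "{{1,2,3},{1,4,5}} \<subseteq> triples V7 - E" by (simp add: triples_def V7_def)
  moreover have "card {{1,2,3},{1,4,5::nat}} = 2" by code_simp
  ultimately have card_R: "card R = 3"
    unfolding R_def using card_nonedges_eq_5 by (simp add: card_Diff_subset)
  have "P \<inter> R \<noteq> {}" if P: "P \<in> set fano_copies" for P
  proof -
    obtain f where f: "bij_betw f V7 V7" "P = hg_image f fano"
      using fano_copies_relabel[OF P] .
    have "\<not> (\<forall>e\<in>fano. f ` e \<in> E)"
      using fano_free f(1) unfolding contains_hg_def bij_betw_def by auto
    then obtain e where "e \<in> fano" "f ` e \<notin> E" by blast
    moreover have "f ` e \<in> P" using \<open>e \<in> fano\<close> unfolding f(2) hg_image_def by (rule imageI)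
    moreover have "P \<subseteq> triples V7" "{1,2,3} \<notin> P" "{1,4,5} \<notin> P"
      using fano_copies_avoid_123_145 P by auto
    ultimately have "f ` e \<in> P \<inter> R" unfolding R_def by auto
    then show ?thesis by blast
  qed
  moreover have "finite R" unfolding R_def triples_def V7_def by simp
  moreover have "\<forall>t\<in>R. length (filter (\<lambda>P. t \<in> P) fano_copies) \<le> 6"
    using fano_copies_degree unfolding R_def by blast
  ultimately have "length fano_copies \<le> card R * 6"
    by (intro length_le_card_mult_if_hitting) auto
  then show False by (simp add: card_R length_fano_copies)
qed

lemma nonedges_V7_cases:
  assumes "M \<subseteq> triples V7" "card M = 5" "{1,2,3} \<in> M" "{1,2,4} \<in> M"
    and "\<forall>X\<in>M. \<forall>Y\<in>M. card (X \<inter> Y) \<noteq> 1"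
  shows "M = {{1,2,3},{1,2,4},{1,2,5},{1,2,6},{1,2,7}} \<or> M = {{1,2,3},{1,2,4},{1,3,4},{2,3,4},{5,6,7}}"
proof -
  let ?C = "{{1,2,5},{1,2,6},{1,2,7},{1,3,4},{2,3,4},{5,6,7::nat}}"
  let ?S = "M - {{1,2,3},{1,2,4}}"
  have C: "\<forall>t\<in>triples V7. card (t \<inter> {1,2,3}) \<noteq> 1 \<and> card (t \<inter> {1,2,4}) \<noteq> 1
      \<and> t \<noteq> {1,2,3} \<and> t \<noteq> {1,2,4} \<longrightarrow> t \<in> ?C"
    unfolding triples_code V7_def by code_simp
  have "?S \<subseteq> ?C"
  proof
    fix t assume t: "t \<in> ?S"
    show "t \<in> ?C"
    proof (rule C[rule_format])
      show "t \<in> triples V7" using t assms(1) by blast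
      show "card (t \<inter> {1,2,3}) \<noteq> 1 \<and> card (t \<inter> {1,2,4}) \<noteq> 1 \<and> t \<noteq> {1,2,3} \<and> t \<noteq> {1,2,4}"
        using t assms(3-5) by blast
    qed
  qed
  moreover have "card ?S = 3"
  proof -
    have "card {{1,2,3},{1,2,4::nat}} = 2" by code_simp
    then show ?thesis using assms(2-4) by (simp add: card_Diff_subset)
  qed
  moreover have "\<forall>X\<in>?S. \<forall>Y\<in>?S. card (X \<inter> Y) \<noteq> 1" using assms(5) by blast
  moreover have "\<forall>S\<in>Pow ?C. card S = 3 \<and> (\<forall>X\<in>S. \<forall>Y\<in>S. card (X \<inter> Y) \<noteq> 1)
      \<longrightarrow> S = {{1,2,5},{1,2,6},{1,2,7}} \<or> S = {{1,3,4},{2,3,4},{5,6,7}}"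
    by code_simp
  ultimately have "?S = {{1,2,5},{1,2,6},{1,2,7}} \<or> ?S = {{1,3,4},{2,3,4},{5,6,7}}"
    by (simp only: Pow_iff)
  moreover have "M = insert {1,2,3} (insert {1,2,4} ?S)" using assms(3,4) by blast
  ultimately show ?thesis by (elim disjE) simp_all
qed

lemma J7_eq_complement: "J7 = triples V7 - {{1,2,3},{1,2,4},{1,2,5},{1,2,6},{1,2,7}}"
proof -
  have "J7 = Set.filter (\<lambda>e. \<not> {1,2} \<subseteq> e) (triples V7)"
    unfolding J7_def triples_def by auto
  also have "\<dots> = triples V7 - {{1,2,3},{1,2,4},{1,2,5},{1,2,6},{1,2,7}}"
    unfolding triples_code V7_def by code_simp
  finally show ?thesis .
qed

text \<open>These non-edges are the triples inside 1234 or inside 567; the permutation \<open>\<sigma>\<close> below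
  maps 1234 onto 4567 and 567 onto 123, the two parts of \<open>B7\<close>.\<close>
lemma iso_hg_complement_B7:
  "iso_hg V7 (triples V7 - {{1,2,3},{1,2,4},{1,3,4},{2,3,4},{5,6,7}}) V7 B7"
proof -
  let ?\<sigma> = "\<lambda>i. [4,5,6,7,1,2,3::nat] ! (i - 1)"
  have B7_filter: "B7 = Set.filter (\<lambda>e. e \<inter> {1,2,3} \<noteq> {} \<and> e \<inter> {4,5,6,7} \<noteq> {}) (triples V7)"
    unfolding B7_def triples_def by auto
  have "bij_betw ?\<sigma> V7 V7" unfolding bij_betw_def V7_def by code_simp
  moreover have "(\<lambda>e. ?\<sigma> ` e) ` (triples V7 - {{1,2,3},{1,2,4},{1,3,4},{2,3,4},{5,6,7}}) = B7"
    unfolding B7_filter triples_code V7_def by code_simp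
  ultimately show ?thesis unfolding iso_hg_def by blast
qed

context fano_free_7_30
begin

lemma relabel_numbering:
  assumes "distinct xs" "set xs \<subseteq> V"
  obtains g where "bij_betw g V V7" "map g xs = [1..<Suc (length xs)]"
proof -
  obtain g where "bij_betw g V {1..7}" "\<forall>i<length xs. g (xs ! i) = Suc i"
    using ex_bij_betw_numbering[OF finite_V card_V assms] by blast
  moreover have "map g xs = [1..<Suc (length xs)]"
    using calculation(2) by (intro nth_equalityI) (simp_all del: upt_Suc)
  ultimately show ?thesis using that unfolding V7_def by blast
qed

lemma card_Int_nonedges_ne_1:
  assumes A: "A \<in> triples V - E" and B: "B \<in> triples V - E"
  shows "card (A \<inter> B) \<noteq> 1"
proof
  assume "card (A \<inter> B) = 1"
  then obtain a where a: "A \<inter> B = {a}" by (auto simp: card_1_singleton_iff)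
  have "card A = 3" "card B = 3" "A \<subseteq> V" "B \<subseteq> V" using A B by (auto simp: triples_def)
  have "A \<noteq> {a}" using \<open>card A = 3\<close> by auto
  then obtain b where "b \<in> A" "b \<noteq> a" using a by blast
  then obtain c where A_eq: "A = {a, b, c}" "c \<noteq> a" "c \<noteq> b"
    using card_3_ex_third[OF \<open>card A = 3\<close>] a by blast
  have "B \<noteq> {a}" using \<open>card B = 3\<close> by auto
  then obtain d where "d \<in> B" "d \<noteq> a" using a by blast
  then obtain e where B_eq: "B = {a, d, e}" "e \<noteq> a" "e \<noteq> d"
    using card_3_ex_third[OF \<open>card B = 3\<close>] a by blast
  have "distinct [a, b, c, d, e]" "set [a, b, c, d, e] \<subseteq> V"
    using a A_eq B_eq \<open>b \<noteq> a\<close> \<open>d \<noteq> a\<close> \<open>A \<subseteq> V\<close> \<open>B \<subseteq> V\<close> by auto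
  then obtain g where g: "bij_betw g V V7" "map g [a, b, c, d, e] = [1..<Suc (length [a, b, c, d, e])]"
    by (rule relabel_numbering)
  then have "g a = 1" "g b = 2" "g c = 3" "g d = 4" "g e = 5" by (simp_all add: upt_rec)
  then have "g ` A = {1,2,3}" "g ` B = {1,4,5}" using A_eq B_eq by auto
  moreover have "g ` A \<in> triples V7 - hg_image g E" "g ` B \<in> triples V7 - hg_image g E"
    using image_in_nonedges_hg_image[OF g(1) edges_subset_Pow] A B by auto
  ultimately show False
    using fano_free_7_30_V7_edge_123_or_145[OF relabel[OF g(1)]] by auto
qed

lemma ex_nonedges_sharing_pair:
  "\<exists>A\<in>triples V - E. \<exists>B\<in>triples V - E. card (A \<inter> B) = 2"
proof -
  have "\<not> pairwise disjnt (triples V - E)"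
  proof
    assume "pairwise disjnt (triples V - E)"
    then have "card (triples V - E) * 3 \<le> card V"
      by (intro card_mult_le_card_if_pairwise_disjnt[OF finite_V]) (auto simp: triples_def)
    then show False using card_nonedges_eq_5 card_V by simp
  qed
  then obtain A B where A: "A \<in> triples V - E" and B: "B \<in> triples V - E"
    and "A \<noteq> B" "A \<inter> B \<noteq> {}"
    by (auto simp: pairwise_def disjnt_def)
  have "A \<subseteq> V" "B \<subseteq> V" "card A = 3" "card B = 3" using A B by (auto simp: triples_def)
  then have "finite A" "finite B" using finite_V by (auto intro: finite_subset)
  have "A \<inter> B \<noteq> A"
  proof
    assume "A \<inter> B = A"
    then have "A \<subseteq> B" by blast
    then show False
      using card_subset_eq[OF \<open>finite B\<close>] \<open>card A = 3\<close> \<open>card B = 3\<close> \<open>A \<noteq> B\<close> by simp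
  qed
  then have "card (A \<inter> B) < 3"
    using psubset_card_mono[OF \<open>finite A\<close>] \<open>card A = 3\<close> by (metis Int_lower1 psubsetI)
  moreover have "card (A \<inter> B) \<noteq> 0" using \<open>A \<inter> B \<noteq> {}\<close> \<open>finite A\<close> by simp
  moreover have "card (A \<inter> B) \<noteq> 1" using card_Int_nonedges_ne_1[OF A B] .
  ultimately have "card (A \<inter> B) = 2" by linarith
  then show ?thesis using A B by blast
qed

end

lemma fano_free_7_30_V7_J7_or_B7:
  assumes "fano_free_7_30 V7 E" "{1,2,3} \<notin> E" "{1,2,4} \<notin> E"
  shows "E = J7 \<or> iso_hg V7 E V7 B7"
proof -
  interpret fano_free_7_30 V7 E by fact
  have "triples V7 - E = {{1,2,3},{1,2,4},{1,2,5},{1,2,6},{1,2,7}}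
      \<or> triples V7 - E = {{1,2,3},{1,2,4},{1,3,4},{2,3,4},{5,6,7}}"
    using assms(2,3) card_nonedges_eq_5 card_Int_nonedges_ne_1
    by (intro nonedges_V7_cases) (auto simp: triples_def V7_def)
  moreover have E_eq: "E = triples V7 - (triples V7 - E)"
    using uniform unfolding uniform3_iff_subset_triples by blast
  ultimately show ?thesis
  proof (elim disjE)
    assume M: "triples V7 - E = {{1,2,3},{1,2,4},{1,2,5},{1,2,6},{1,2,7}}"
    have "E = J7" unfolding J7_eq_complement using E_eq unfolding M .
    then show ?thesis ..
  next
    assume M: "triples V7 - E = {{1,2,3},{1,2,4},{1,3,4},{2,3,4},{5,6,7}}"
    have "E = triples V7 - {{1,2,3},{1,2,4},{1,3,4},{2,3,4},{5,6,7}}" using E_eq unfolding M .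
    then show ?thesis using iso_hg_complement_B7 by simp
  qed
qed

lemma (in fano_free_7_30) iso_B7_or_J7_if_nonedges_share_pair:
  assumes A: "A \<in> triples V - E" and B: "B \<in> triples V - E" and AB: "card (A \<inter> B) = 2"
  shows "iso_hg V E V7 B7 \<or> iso_hg V E V7 J7"
proof -
  obtain a b where ab: "A \<inter> B = {a, b}" "a \<noteq> b" using AB by (auto simp: card_2_iff)
  have "card A = 3" "card B = 3" "A \<subseteq> V" "B \<subseteq> V" using A B by (auto simp: triples_def)
  obtain c where A_eq: "A = {a, b, c}" "c \<noteq> a" "c \<noteq> b"
    using card_3_ex_third[OF \<open>card A = 3\<close>] ab by blast
  obtain d where B_eq: "B = {a, b, d}" "d \<noteq> a" "d \<noteq> b"
    using card_3_ex_third[OF \<open>card B = 3\<close>] ab by blast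
  have "c \<noteq> d"
  proof
    assume "c = d"
    then have "A \<inter> B = A" using A_eq B_eq by blast
    then show False using AB \<open>card A = 3\<close> by simp
  qed
  then have "distinct [a, b, c, d]" "set [a, b, c, d] \<subseteq> V"
    using ab A_eq B_eq \<open>A \<subseteq> V\<close> \<open>B \<subseteq> V\<close> by auto
  then obtain g where g: "bij_betw g V V7" "map g [a, b, c, d] = [1..<Suc (length [a, b, c, d])]"
    by (rule relabel_numbering)
  then have "g a = 1" "g b = 2" "g c = 3" "g d = 4" by (simp_all add: upt_rec)
  then have "g ` A = {1,2,3}" "g ` B = {1,2,4}" using A_eq B_eq by auto
  moreover have "g ` A \<notin> hg_image g E" "g ` B \<notin> hg_image g E"
    using image_in_nonedges_hg_image[OF g(1) edges_subset_Pow] A B by auto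
  ultimately have "hg_image g E = J7 \<or> iso_hg V7 (hg_image g E) V7 B7"
    using fano_free_7_30_V7_J7_or_B7[OF relabel[OF g(1)]] by simp
  moreover have "iso_hg V E V7 (hg_image g E)" by (rule iso_hg_hg_image[OF g(1)])
  ultimately show ?thesis using iso_hg_trans by auto
qed

theorem lemma2p2:
  fixes V :: "'a set" and E :: "'a set set"
  assumes "uniform3 V E"
    and "card V = 7"
    and "card E = 30"
    and "\<not> contains_hg V E V7 fano"
  shows "iso_hg V E V7 B7 \<or> iso_hg V E V7 J7"
proof -
  interpret fano_free_7_30 V E using assms by unfold_locales
  obtain A B where "A \<in> triples V - E" "B \<in> triples V - E" "card (A \<inter> B) = 2"
    using ex_nonedges_sharing_pair by blast
  then show ?thesis by (rule iso_B7_or_J7_if_nonedges_share_pair)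
qed

end
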